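(* Let $P$ be a finite poset, $I\in\mathcal{IC}(P)$, and let $x$ be a maximal element of $P$ or a minimal element of $P$. If $x\in I$, then $x\notin\mathrm{Row}(I)$.
   Context: All posets are finite. For a poset $P$, a subset $I\subseteq P$ is interval-closed if for all $x,y\in I$ and $z\in P$ with $x\le z\le y$ we have $z\in I$; $\mathcal{IC}(P)$ is the set of interval-closed subsets of $P$. For $x\in P$ the toggle $t_x:\mathcal{IC}(P)\to\mathcal{IC}(P)$ is defined by $t_x(I)=I\triangle\{x\}$ if $I\triangle\{x\}\in\mathcal{IC}(P)$ and $t_x(I)=I$ otherwise. Rowmotion is $\mathrm{Row}=t_{x_1}\circ t_{x_2}\circ\cdots\circ t_{x_N}:\mathcal{IC}(P)\to\mathcal{IC}(P)$, where $(x_1,\dots,x_N)$ is a linear extension of $P$ (so elements are toggled from the top of the poset down); this does not depend on the choice of linear extension. *)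

theory Defs
  imports Main
begin

text \<open>A finite poset is modelled as a finite type with a partial order;
  the poset P is the whole type (UNIV).\<close>

definition interval_closed :: "'a::order set \<Rightarrow> bool" where
  "interval_closed I \<longleftrightarrow> (\<forall>x\<in>I. \<forall>y\<in>I. \<forall>z. x \<le> z \<and> z \<le> y \<longrightarrow> z \<in> I)"

definition IC :: "'a::order set set" where
  "IC = {I. interval_closed I}"

definition toggle :: "'a::order \<Rightarrow> 'a set \<Rightarrow> 'a set" where
  "toggle x I = (if interval_closed ((if x \<in> I then I - {x} else insert x I)) then (if x \<in> I then I - {x} else insert x I) else I)"

definition linear_extension :: "'a::{finite,order} list \<Rightarrow> bool" where
  "linear_extension xs \<longleftrightarrow> distinct xs \<and> set xs = UNIV \<and>
     (\<forall>i<length xs. \<forall>j<length xs. xs ! i \<le> xs ! j \<longrightarrow> i \<le> j)"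

text \<open>Row = t_{x_1} o t_{x_2} o ... o t_{x_N}, i.e. t_{x_N} is applied first.\<close>
definition rowmotion_wrt :: "'a::order list \<Rightarrow> 'a set \<Rightarrow> 'a set" where
  "rowmotion_wrt xs I = foldr toggle xs I"

definition Row :: "'a::{finite,order} set \<Rightarrow> 'a set" where
  "Row I = rowmotion_wrt (SOME xs. linear_extension xs) I"

end

theory Submission
  imports Defs
begin

text \<open>An extremal element is never strictly between two others, so it can always be toggled out
  of an interval-closed set. In a linear extension it is toggled exactly once, and no other toggle
  changes its membership; every intermediate set is interval-closed, so that one toggle removes it.
  The only remaining point is that a linear extension exists, as otherwise the choice made
  in Row would be arbitrary.\<close>

lemma interval_closed_Diff_extremal:
  assumes "(\<forall>y. x \<le> y \<longrightarrow> y = x) \<or> (\<forall>y. y \<le> x \<longrightarrow> y = x)"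
    and "interval_closed J"
  shows "interval_closed (J - {x})"
  using assms unfolding interval_closed_def by (metis Diff_iff singletonD)

lemma interval_closed_toggle: "interval_closed J \<Longrightarrow> interval_closed (toggle y J)"
  unfolding toggle_def by auto

lemma mem_toggle_other: "y \<noteq> x \<Longrightarrow> x \<in> toggle y J \<longleftrightarrow> x \<in> J"
  unfolding toggle_def by auto

lemma notin_toggle_extremal:
  assumes "(\<forall>y. x \<le> y \<longrightarrow> y = x) \<or> (\<forall>y. y \<le> x \<longrightarrow> y = x)"
    and "interval_closed J" "x \<in> J"
  shows "x \<notin> toggle x J"
  using interval_closed_Diff_extremal[OF assms(1,2)] assms(3) unfolding toggle_def by auto

lemma interval_closed_foldr_toggle:
  "interval_closed I \<Longrightarrow> interval_closed (foldr toggle xs I)"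
  by (induction xs) (auto intro: interval_closed_toggle)

lemma mem_foldr_toggle_notin: "x \<notin> set xs \<Longrightarrow> x \<in> foldr toggle xs I \<longleftrightarrow> x \<in> I"
  by (induction xs) (auto simp: mem_toggle_other)

lemma notin_foldr_toggle_extremal:
  assumes extremal: "(\<forall>y. x \<le> y \<longrightarrow> y = x) \<or> (\<forall>y. y \<le> x \<longrightarrow> y = x)"
    and "interval_closed I" "x \<in> I"
    and "distinct xs" "x \<in> set xs"
  shows "x \<notin> foldr toggle xs I"
  using assms(4,5)
proof (induction xs)
  case Nil
  then show ?case by simp
next
  case (Cons y ys)
  show ?case
  proof (cases "y = x")
    case True
    with Cons.prems have "x \<in> foldr toggle ys I"
      using mem_foldr_toggle_notin \<open>x \<in> I\<close> by auto
    with True show ?thesis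
      using notin_toggle_extremal[OF extremal interval_closed_foldr_toggle[OF \<open>interval_closed I\<close>]]
      by simp
  next
    case False
    with Cons show ?thesis by (simp add: mem_toggle_other)
  qed
qed

lemma finite_set_has_sorted_enumeration:
  fixes S :: "'a::order set"
  assumes "finite S"
  shows "\<exists>xs. distinct xs \<and> set xs = S \<and> sorted_wrt (\<lambda>a b. \<not> b \<le> a) xs"
  using assms
proof (induction "card S" arbitrary: S rule: less_induct)
  case less
  show ?case
  proof (cases "S = {}")
    case True
    then show ?thesis by auto
  next
    case False
    obtain m where m: "m \<in> S" "\<forall>b\<in>S. m \<le> b \<longrightarrow> m = b"
      using finite_has_maximal[OF less.prems False] by blast
    have "card (S - {m}) < card S"
      using m less.prems by (meson card_Diff1_less)
    then obtain ys where ys: "distinct ys" "set ys = S - {m}" "sorted_wrt (\<lambda>a b. \<not> b \<le> a) ys"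
      using less by (meson finite_Diff)
    have "distinct (ys @ [m]) \<and> set (ys @ [m]) = S \<and> sorted_wrt (\<lambda>a b. \<not> b \<le> a) (ys @ [m])"
      using ys m by (auto simp: sorted_wrt_append)
    then show ?thesis by blast
  qed
qed

lemma linear_extension_exists: "\<exists>xs::'a::{finite,order} list. linear_extension xs"
proof -
  obtain xs :: "'a list"
    where xs: "distinct xs" "set xs = UNIV" "sorted_wrt (\<lambda>a b. \<not> b \<le> a) xs"
    using finite_set_has_sorted_enumeration[of "UNIV :: 'a set"] by auto
  have "\<forall>i<length xs. \<forall>j<length xs. xs ! i \<le> xs ! j \<longrightarrow> i \<le> j"
    using xs(3) unfolding sorted_wrt_iff_nth_less by (metis not_le)
  with xs show ?thesis unfolding linear_extension_def by blast
qed

theorem lemma2p13: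
  fixes I :: "'a::{finite,order} set" and x :: 'a
  assumes "I \<in> IC"
    and "(\<forall>y. x \<le> y \<longrightarrow> y = x) \<or> (\<forall>y. y \<le> x \<longrightarrow> y = x)"
    and "x \<in> I"
  shows "x \<notin> Row I"
proof -
  let ?xs = "SOME xs::'a list. linear_extension xs"
  have "linear_extension ?xs"
    using someI_ex[OF linear_extension_exists] .
  then have "distinct ?xs" "x \<in> set ?xs"
    unfolding linear_extension_def by auto
  moreover have "interval_closed I"
    using assms(1) unfolding IC_def by simp
  ultimately show ?thesis
    using notin_foldr_toggle_extremal[OF assms(2) _ assms(3)]
    unfolding Row_def rowmotion_wrt_def by blast
qed

end
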